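(* For the two-pathogen model described in the context with no spillover ($s=0$) and positive parameters, if $\mathcal{R}_{0,A}>1$ and $\mathcal{R}_{0,B}>1$, then the endemic equilibrium $(S_A,I_A,\widetilde I_A,S_B,I_B,\widetilde I_B)=\bigl(1-\bar I_A-\tfrac{\tau_R}{\tau_I}\bar I_A,\ \bar I_A,\ \bar I_A,\ 1-\bar I_B-\tfrac{\tau_R}{\tau_I}\bar I_B,\ \bar I_B,\ \bar I_B\bigr)$ of the reduced system is locally asymptotically stable.
   Context: Model with no spillover: for $i\in\{A,B\}$, state variables $S_i,I_i,R_i,\widetilde I_i$ satisfy $\dot S_i=-\beta_{0,i}e^{-k\widetilde I_i} S_iI_i+R_i/\tau_R$, $\dot I_i=\beta_{0,i}e^{-k\widetilde I_i}S_iI_i-I_i/\tau_I$, $\dot R_i=I_i/\tau_I-R_i/\tau_R$, $\dot{\widetilde I}_i=(I_i-\widetilde I_i)/\tau_P$, with $S_i+I_i+R_i=1$. All parameters $\beta_{0,A},\beta_{0,B},\tau_I,\tau_R,\tau_P,k$ are positive. $\mathcal{R}_{0,i}=\beta_{0,i}\tau_I$. For $\mathcal{R}_{0,i}>1$, $\bar I_i$ denotes the unique positive solution of $e^{kI}=\beta_{0,i}\tau_I-\beta_{0,i}(\tau_I+\tau_R)I$. The reduced system is obtained by substituting $R_i=1-S_i-I_i$ and keeping only the equations for $S_i,I_i,\widetilde I_i$. Locally asymptotically stable means all eigenvalues of the Jacobian of the reduced system at the equilibrium have negative real part. *)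

theory Defs
  imports "HOL-Analysis.Analysis" "HOL-Library.Numeral_Type"
begin

text \<open>State vector of the reduced system, indexed by the 6-element type:
  component 0 = S_A, 1 = I_A, 2 = tilde I_A, 3 = S_B, 4 = I_B, 5 = tilde I_B.
  R_i is eliminated via R_i = 1 - S_i - I_i.\<close>

definition R0 :: "real \<Rightarrow> real \<Rightarrow> real" where
  "R0 \<beta> \<tau>I = \<beta> * \<tau>I"

definition dS :: "real \<Rightarrow> real \<Rightarrow> real \<Rightarrow> real \<Rightarrow> real \<Rightarrow> real \<Rightarrow> real \<Rightarrow> real" where
  "dS \<beta> \<tau>I \<tau>R k S I T = - \<beta> * exp (- k * T) * S * I + (1 - S - I) / \<tau>R"

definition dI :: "real \<Rightarrow> real \<Rightarrow> real \<Rightarrow> real \<Rightarrow> real \<Rightarrow> real \<Rightarrow> real" where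
  "dI \<beta> \<tau>I k S I T = \<beta> * exp (- k * T) * S * I - I / \<tau>I"

definition dT :: "real \<Rightarrow> real \<Rightarrow> real \<Rightarrow> real" where
  "dT \<tau>P I T = (I - T) / \<tau>P"

definition reduced_field ::
  "real \<Rightarrow> real \<Rightarrow> real \<Rightarrow> real \<Rightarrow> real \<Rightarrow> real \<Rightarrow> real^6 \<Rightarrow> real^6" where
  "reduced_field \<beta>A \<beta>B \<tau>I \<tau>R \<tau>P k x = (\<chi> i.
     if i = 0 then dS \<beta>A \<tau>I \<tau>R k (x$0) (x$1) (x$2)
     else if i = 1 then dI \<beta>A \<tau>I k (x$0) (x$1) (x$2)
     else if i = 2 then dT \<tau>P (x$1) (x$2)
     else if i = 3 then dS \<beta>B \<tau>I \<tau>R k (x$3) (x$4) (x$5)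
     else if i = 4 then dI \<beta>B \<tau>I k (x$3) (x$4) (x$5)
     else dT \<tau>P (x$4) (x$5))"

definition Ibar :: "real \<Rightarrow> real \<Rightarrow> real \<Rightarrow> real \<Rightarrow> real" where
  "Ibar \<beta> \<tau>I \<tau>R k = (THE I. I > 0 \<and> exp (k * I) = \<beta> * \<tau>I - \<beta> * (\<tau>I + \<tau>R) * I)"

definition endemic_eq :: "real \<Rightarrow> real \<Rightarrow> real \<Rightarrow> real \<Rightarrow> real \<Rightarrow> real^6" where
  "endemic_eq \<beta>A \<beta>B \<tau>I \<tau>R k = (let IA = Ibar \<beta>A \<tau>I \<tau>R k; IB = Ibar \<beta>B \<tau>I \<tau>R k in
     (\<chi> i. if i = 0 then 1 - IA - \<tau>R / \<tau>I * IA
       else if i = 1 then IA else if i = 2 then IA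
       else if i = 3 then 1 - IB - \<tau>R / \<tau>I * IB
       else if i = 4 then IB else IB))"

definition complexify :: "real^'n^'n \<Rightarrow> complex^'n^'n" where
  "complexify A = (\<chi> i j. complex_of_real (A$i$j))"

definition is_eigenvalue :: "complex^'n^'n \<Rightarrow> complex \<Rightarrow> bool" where
  "is_eigenvalue A c \<longleftrightarrow> (\<exists>v. v \<noteq> 0 \<and> A *v v = c *s v)"

definition locally_asymptotically_stable :: "(real^'n \<Rightarrow> real^'n) \<Rightarrow> real^'n \<Rightarrow> bool" where
  "locally_asymptotically_stable F x0 \<longleftrightarrow>
     (\<exists>J. (F has_derivative (\<lambda>h. J *v h)) (at x0) \<and>
          (\<forall>c. is_eigenvalue (complexify J) c \<longrightarrow> Re c < 0))"

end

theory Submission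
  imports Defs
begin

text \<open>Without spillover the two pathogens decouple: the Jacobian of the reduced system is
  block diagonal with one 3 \<times> 3 block per pathogen, so every eigenvalue is an eigenvalue of
  one block. At the endemic equilibrium the force of infection balances recovery,
  \<open>\<beta> exp (-k I) S = 1 / \<tau>I\<close>, which turns each block into a matrix in positive parameters
  whose characteristic polynomial \<open>\<lambda>\<^sup>3 + c\<^sub>2 \<lambda>\<^sup>2 + c\<^sub>1 \<lambda> + c\<^sub>0\<close> has
  positive coefficients with \<open>c\<^sub>2 c\<^sub>1 > c\<^sub>0\<close>. By the Routh-Hurwitz criterion
  all its roots lie in the open left half plane.\<close>

lemma exhaust_6: "(i::6) = 0 \<or> i = 1 \<or> i = 2 \<or> i = 3 \<or> i = 4 \<or> i = 5"
proof (induct i rule: bit0.induct)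
  case (1 z)
  then have "z = 0 \<or> z = 1 \<or> z = 2 \<or> z = 3 \<or> z = 4 \<or> z = 5"
    by simp linarith
  then show ?case by auto
qed

lemma UNIV_6: "(UNIV::6 set) = {0, 1, 2, 3, 4, 5}"
  using exhaust_6 by auto

lemma sum_UNIV_6: "sum f (UNIV::6 set) = f 0 + f 1 + f 2 + f 3 + f 4 + f 5"
  unfolding UNIV_6 by (simp add: ac_simps)

lemma UNIV_3_zero_based: "(UNIV::3 set) = {0, 1, 2}"
proof -
  have "(3::3) = 0" by simp
  then show ?thesis using UNIV_3 by auto
qed

lemma sum_UNIV_3_zero_based: "sum f (UNIV::3 set) = f 0 + f 1 + f 2"
  unfolding UNIV_3_zero_based by (simp add: ac_simps)

lemma has_derivative_vec_nth [derivative_intros]: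
  "((\<lambda>x. x $ i) has_derivative (\<lambda>h. h $ i)) F"
  by (rule bounded_linear.has_derivative[OF bounded_linear_vec_nth has_derivative_ident])

lemma has_derivative_vec_componentwiseI:
  fixes f :: "'a::real_normed_vector \<Rightarrow> real^'n"
  assumes "\<And>i. ((\<lambda>x. f x $ i) has_derivative (\<lambda>h. f' h $ i)) (at a within S)"
  shows "(f has_derivative f') (at a within S)"
proof (rule iffD2[OF has_derivative_componentwise_within], intro ballI)
  fix b :: "real^'n" assume "b \<in> Basis"
  then obtain i where b: "b = axis i 1"
    by (auto simp: Basis_vec_def)
  have inner_b: "y \<bullet> b = y $ i" for y :: "real^'n"
    unfolding b by (simp add: inner_axis)
  show "((\<lambda>x. f x \<bullet> b) has_derivative (\<lambda>h. f' h \<bullet> b)) (at a within S)"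
    unfolding inner_b by (rule assms)
qed

lemma is_eigenvalue_iff_det:
  fixes A :: "complex^'n^'n"
  shows "is_eigenvalue A c \<longleftrightarrow> det (mat c - A) = 0"
proof -
  have "(mat c - A) *v v = c *s v - A *v v" for v
    by (simp add: vec_eq_iff matrix_vector_mult_def mat_def left_diff_distrib sum_subtractf
        if_distrib[of "\<lambda>a. a * _"] cong: if_cong)
  then have "is_eigenvalue A c \<longleftrightarrow> (\<exists>v. v \<noteq> 0 \<and> (mat c - A) *v v = 0)"
    by (auto simp: is_eigenvalue_def)
  also have "\<dots> \<longleftrightarrow> \<not> invertible (mat c - A)"
    by (auto simp: invertible_left_inverse matrix_left_invertible_ker)
  finally show ?thesis
    by (simp add: invertible_det_nz)
qed

definition mod3 :: "6 \<Rightarrow> 3" where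
  "mod3 i = of_int (Rep_bit0 i)"

lemma mod3_simps [simp]:
  "mod3 0 = 0" "mod3 1 = 1" "mod3 2 = 2" "mod3 3 = 0" "mod3 4 = 1" "mod3 5 = 2"
  by (simp_all add: mod3_def bit0.Rep_numeral bit0.Rep_0 bit0.Rep_1)

definition block_diag :: "'a::zero^3^3 \<Rightarrow> 'a^3^3 \<Rightarrow> 'a^6^6" where
  "block_diag A B = (\<chi> i j.
     if i \<in> {0, 1, 2} \<and> j \<in> {0, 1, 2} then A $ mod3 i $ mod3 j
     else if i \<in> {3, 4, 5} \<and> j \<in> {3, 4, 5} then B $ mod3 i $ mod3 j
     else 0)"

lemma complexify_block_diag:
  "complexify (block_diag A B) = block_diag (complexify A) (complexify B)"
  by (simp add: vec_eq_iff complexify_def block_diag_def)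

lemma is_eigenvalue_block_diag:
  assumes "is_eigenvalue (block_diag A B) c"
  shows "is_eigenvalue A c \<or> is_eigenvalue B c"
proof -
  obtain v where "v \<noteq> 0" and eig: "\<And>i. (block_diag A B *v v) $ i = c * v $ i"
    using assms by (auto simp: is_eigenvalue_def)
  define u w :: "complex^3"
    where "u = (\<chi> j. if j = 0 then v$0 else if j = 1 then v$1 else v$2)"
      and "w = (\<chi> j. if j = 0 then v$3 else if j = 1 then v$4 else v$5)"
  have "A *v u = c *s u"
  proof (subst vec_eq_iff, intro allI)
    fix j :: 3
    have "j \<in> {0, 1, 2}" using UNIV_3_zero_based by blast
    then show "(A *v u) $ j = (c *s u) $ j"
      using eig[of 0] eig[of 1] eig[of 2]
      by (auto simp: u_def block_diag_def matrix_vector_mult_def sum_UNIV_6 sum_UNIV_3_zero_based)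
  qed
  moreover have "B *v w = c *s w"
  proof (subst vec_eq_iff, intro allI)
    fix j :: 3
    have "j \<in> {0, 1, 2}" using UNIV_3_zero_based by blast
    then show "(B *v w) $ j = (c *s w) $ j"
      using eig[of 3] eig[of 4] eig[of 5]
      by (auto simp: w_def block_diag_def matrix_vector_mult_def sum_UNIV_6 sum_UNIV_3_zero_based)
  qed
  moreover have "u \<noteq> 0 \<or> w \<noteq> 0"
  proof (rule ccontr)
    assume "\<not> (u \<noteq> 0 \<or> w \<noteq> 0)"
    then have "v $ i = 0" for i
      using exhaust_6[of i]
      by (auto simp: u_def w_def vec_eq_iff dest: spec[of _ 0] spec[of _ 1] spec[of _ 2])
    with \<open>v \<noteq> 0\<close> show False
      by (simp add: vec_eq_iff)
  qed
  ultimately show ?thesis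
    by (auto simp: is_eigenvalue_def)
qed

lemma Routh_Hurwitz_cubic:
  fixes c :: complex and c2 c1 c0 :: real
  assumes "c2 > 0" "c0 > 0" "c2 * c1 > c0"
    and root: "c^3 + c2 * c^2 + c1 * c + c0 = 0"
  shows "Re c < 0"
proof (rule ccontr)
  obtain x y where c: "c = Complex x y" by (cases c)
  assume "\<not> Re c < 0"
  then have x: "x \<ge> 0" by (simp add: c)
  have "c1 > 0"
    using assms(1-3) by (metis order.strict_trans zero_less_mult_pos)
  have re: "x^3 - 3*x*y^2 + c2*(x^2 - y^2) + c1*x + c0 = 0"
    using arg_cong[OF root, of Re] by (simp add: c power2_eq_square power3_eq_cube algebra_simps)
  have im: "y * (3*x^2 - y^2 + 2*c2*x + c1) = 0"
    using arg_cong[OF root, of Im] by (simp add: c power2_eq_square power3_eq_cube algebra_simps)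
  have nonneg: "x^3 \<ge> 0" "c2*x^2 \<ge> 0" "c1*x \<ge> 0" "c2^2*x \<ge> 0"
    using x assms \<open>c1 > 0\<close> by auto
  show False
  proof (cases "y = 0")
    case True
    with re have "x^3 + c2*x^2 + c1*x + c0 = 0" by simp
    with nonneg assms show False by linarith
  next
    case False
    \<comment> \<open>then the imaginary part fixes \<open>y\<^sup>2\<close>, which leaves only nonpositive terms in the real part\<close>
    with im have y2: "y^2 = 3*x^2 + 2*c2*x + c1" by simp
    from re have "- 8*x^3 - 8*c2*x^2 - 2*c1*x - 2*c2^2*x + (c0 - c2*c1) = 0"
      unfolding y2 by (simp add: algebra_simps power2_eq_square power3_eq_cube)
    with nonneg assms show False by linarith
  qed
qed

definition endemic_jacobian :: "real \<Rightarrow> real \<Rightarrow> real \<Rightarrow> real \<Rightarrow> real \<Rightarrow> real^3^3" where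
  "endemic_jacobian a q r m p = (\<chi> i j.
     if i = 0 then (if j = 0 then -(a + r) else if j = 1 then -(q + r) else m)
     else if i = 1 then (if j = 0 then a else if j = 1 then 0 else -m)
     else (if j = 0 then 0 else if j = 1 then p else -p))"

lemma det_endemic_jacobian:
  "det (mat c - complexify (endemic_jacobian a q r m p)) =
     c^3 + (p + a + r) * c^2 + (p*m + a*p + r*p + a*q + a*r) * c + (r*p*m + a*p*q + a*p*r)"
  by (simp add: det_3 mat_def complexify_def endemic_jacobian_def)
    (simp add: algebra_simps power2_eq_square power3_eq_cube)

lemma endemic_jacobian_stable:
  assumes "a > 0" "q > 0" "r > 0" "m > 0" "p > 0"
    and "is_eigenvalue (complexify (endemic_jacobian a q r m p)) c"
  shows "Re c < 0"
proof -
  define c2 c1 c0 where "c2 = p + a + r" and "c1 = p*m + a*p + r*p + a*q + a*r"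
    and "c0 = r*p*m + a*p*q + a*p*r"
  have root: "c^3 + c2 * c^2 + c1 * c + c0 = 0"
    using assms(6) by (simp add: is_eigenvalue_iff_det det_endemic_jacobian c2_def c1_def c0_def)
  have "c2 * c1 - c0
      = p*(p*m + a*p + r*p + a*r) + a*(p*m + a*p + a*q + a*r) + r*(a*p + r*p + a*q + a*r)"
    by (simp add: c2_def c1_def c0_def algebra_simps)
  also have "\<dots> > 0"
    using assms(1-5) by (simp add: add_pos_pos)
  finally have "c2 * c1 > c0"
    by simp
  moreover have "c2 > 0" "c0 > 0"
    using assms(1-5) by (simp_all add: c2_def c0_def add_pos_pos)
  ultimately show ?thesis
    using Routh_Hurwitz_cubic root by blast
qed

lemma endemic_root_unique:
  fixes \<beta> \<tau>I \<tau>R k :: real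
  assumes "\<beta> > 0" "\<tau>I > 0" "\<tau>R \<ge> 0" "k \<ge> 0" "\<beta> * \<tau>I > 1"
  shows "\<exists>!I. I > 0 \<and> exp (k * I) = \<beta> * \<tau>I - \<beta> * (\<tau>I + \<tau>R) * I"
proof -
  define g :: "real \<Rightarrow> real" where "g I = exp (k * I) - \<beta> * \<tau>I + \<beta> * (\<tau>I + \<tau>R) * I" for I
  have root_iff: "I > 0 \<and> exp (k * I) = \<beta> * \<tau>I - \<beta> * (\<tau>I + \<tau>R) * I \<longleftrightarrow> I > 0 \<and> g I = 0" for I
    by (auto simp: g_def algebra_simps)
  have g_strict_mono: "strict_mono g"
  proof (rule strict_monoI)
    fix x y :: real assume "x < y"
    have "exp (k * x) \<le> exp (k * y)"
      using \<open>x < y\<close> assms(4) by (simp add: mult_left_mono)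
    moreover have "\<beta> * (\<tau>I + \<tau>R) * x < \<beta> * (\<tau>I + \<tau>R) * y"
      using \<open>x < y\<close> assms(1-3) by simp
    ultimately show "g x < g y"
      unfolding g_def by linarith
  qed
  define u where "u = \<tau>I / (\<tau>I + \<tau>R)"
  have "g 0 < 0" using assms(5) by (simp add: g_def)
  moreover have "g u \<ge> 0" using assms(2,3) by (simp add: g_def u_def)
  moreover have "u \<ge> 0" using assms(2,3) by (simp add: u_def)
  moreover have "continuous_on {0..u} g" unfolding g_def by (intro continuous_intros)
  ultimately obtain I where "0 \<le> I" "I \<le> u" "g I = 0"
    using IVT'[of g 0 0 u] by auto
  with \<open>g 0 < 0\<close> have "I > 0 \<and> g I = 0"
    by (cases "I = 0") auto
  moreover have "J = I" if "J > 0 \<and> g J = 0" for J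
    using that \<open>g I = 0\<close> g_strict_mono strict_mono_eq by metis
  ultimately show ?thesis
    unfolding root_iff by blast
qed

lemma Ibar_root:
  fixes \<beta> \<tau>I \<tau>R k :: real
  assumes "\<beta> > 0" "\<tau>I > 0" "\<tau>R \<ge> 0" "k \<ge> 0" "\<beta> * \<tau>I > 1"
  shows "Ibar \<beta> \<tau>I \<tau>R k > 0"
    and "exp (k * Ibar \<beta> \<tau>I \<tau>R k) = \<beta> * \<tau>I - \<beta> * (\<tau>I + \<tau>R) * Ibar \<beta> \<tau>I \<tau>R k"
  using theI'[OF endemic_root_unique[OF assms]] unfolding Ibar_def by auto

definition sit_jacobian ::
  "real \<Rightarrow> real \<Rightarrow> real \<Rightarrow> real \<Rightarrow> real \<Rightarrow> real \<Rightarrow> real \<Rightarrow> real \<Rightarrow> real^3^3" where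
  "sit_jacobian \<beta> \<tau>I \<tau>R \<tau>P k S I T = (let b = \<beta> * exp (- k * T) in \<chi> i j.
     if i = 0 then
       (if j = 0 then - b * I - 1 / \<tau>R else if j = 1 then - b * S - 1 / \<tau>R else b * S * (k * I))
     else if i = 1 then
       (if j = 0 then b * I else if j = 1 then b * S - 1 / \<tau>I else - b * S * (k * I))
     else (if j = 0 then 0 else if j = 1 then 1 / \<tau>P else - 1 / \<tau>P))"

lemma sit_jacobian_at_endemic:
  assumes "\<tau>I > 0"
    and root: "exp (k * I) = \<beta> * \<tau>I - \<beta> * (\<tau>I + \<tau>R) * I"
    and S: "S = 1 - I - \<tau>R / \<tau>I * I"
  shows "sit_jacobian \<beta> \<tau>I \<tau>R \<tau>P k S I I =
    endemic_jacobian (\<beta> * exp (- k * I) * I) (1 / \<tau>I) (1 / \<tau>R) (k * I / \<tau>I) (1 / \<tau>P)"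
proof -
  have "\<beta> * \<tau>I * S = \<beta> * \<tau>I - \<beta> * (\<tau>I + \<tau>R) * I"
    using assms(1) by (simp add: S field_simps)
  with root have "exp (k * I) = \<beta> * \<tau>I * S"
    by simp
  then have "S \<noteq> 0" "\<beta> \<noteq> 0"
    by (metis exp_not_eq_zero mult_eq_0_iff)+
  with \<open>exp (k * I) = \<beta> * \<tau>I * S\<close> have force_balance: "\<beta> * exp (- (k * I)) * S = 1 / \<tau>I"
    using assms(1) by (simp add: exp_minus field_simps)
  show ?thesis
    unfolding sit_jacobian_def endemic_jacobian_def Let_def
    by (simp add: vec_eq_iff force_balance)
qed

lemma has_derivative_sit_rows:
  fixes a b c :: "'n::finite" and x :: "real^'n" and \<beta> \<tau>I \<tau>R \<tau>P k :: real
  defines "J \<equiv> sit_jacobian \<beta> \<tau>I \<tau>R \<tau>P k (x$a) (x$b) (x$c)"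
  shows "((\<lambda>x. dS \<beta> \<tau>I \<tau>R k (x$a) (x$b) (x$c)) has_derivative
           (\<lambda>h. J$0$0 * h$a + J$0$1 * h$b + J$0$2 * h$c)) (at x)"
    and "((\<lambda>x. dI \<beta> \<tau>I k (x$a) (x$b) (x$c)) has_derivative
           (\<lambda>h. J$1$0 * h$a + J$1$1 * h$b + J$1$2 * h$c)) (at x)"
    and "((\<lambda>x. dT \<tau>P (x$b) (x$c)) has_derivative
           (\<lambda>h. J$2$0 * h$a + J$2$1 * h$b + J$2$2 * h$c)) (at x)"
  unfolding J_def sit_jacobian_def Let_def dS_def dI_def dT_def divide_inverse
  by (simp; (rule derivative_eq_intros refl | simp)+; simp add: fun_eq_iff algebra_simps)+

lemma has_derivative_reduced_field:
  "(reduced_field \<beta>A \<beta>B \<tau>I \<tau>R \<tau>P k has_derivative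
     (\<lambda>h. block_diag (sit_jacobian \<beta>A \<tau>I \<tau>R \<tau>P k (x$0) (x$1) (x$2))
                     (sit_jacobian \<beta>B \<tau>I \<tau>R \<tau>P k (x$3) (x$4) (x$5)) *v h)) (at x)"
proof (rule has_derivative_vec_componentwiseI)
  fix i :: 6
  have "i \<in> {0, 1, 2, 3, 4, 5}"
    using UNIV_6 by blast
  then show "((\<lambda>x. reduced_field \<beta>A \<beta>B \<tau>I \<tau>R \<tau>P k x $ i) has_derivative
      (\<lambda>h. (block_diag (sit_jacobian \<beta>A \<tau>I \<tau>R \<tau>P k (x$0) (x$1) (x$2))
                     (sit_jacobian \<beta>B \<tau>I \<tau>R \<tau>P k (x$3) (x$4) (x$5)) *v h) $ i)) (at x)"
    by (elim insertE emptyE;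
        simp add: reduced_field_def block_diag_def matrix_vector_mult_def sum_UNIV_6 has_derivative_sit_rows)
qed

theorem theorem5:
  fixes \<beta>A \<beta>B \<tau>I \<tau>R \<tau>P k :: real
  assumes "\<beta>A > 0" "\<beta>B > 0" "\<tau>I > 0" "\<tau>R > 0" "\<tau>P > 0" "k > 0"
    and "R0 \<beta>A \<tau>I > 1" "R0 \<beta>B \<tau>I > 1"
  shows "locally_asymptotically_stable (reduced_field \<beta>A \<beta>B \<tau>I \<tau>R \<tau>P k)
           (endemic_eq \<beta>A \<beta>B \<tau>I \<tau>R k)"
proof -
  define IA IB where "IA = Ibar \<beta>A \<tau>I \<tau>R k" and "IB = Ibar \<beta>B \<tau>I \<tau>R k"
  define x0 where "x0 = endemic_eq \<beta>A \<beta>B \<tau>I \<tau>R k"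
  define J where "J \<beta> I =
    endemic_jacobian (\<beta> * exp (- k * I) * I) (1 / \<tau>I) (1 / \<tau>R) (k * I / \<tau>I) (1 / \<tau>P)" for \<beta> I
  have IA: "IA > 0" "exp (k * IA) = \<beta>A * \<tau>I - \<beta>A * (\<tau>I + \<tau>R) * IA"
    using Ibar_root[of \<beta>A \<tau>I \<tau>R k] assms by (simp_all add: IA_def R0_def)
  have IB: "IB > 0" "exp (k * IB) = \<beta>B * \<tau>I - \<beta>B * (\<tau>I + \<tau>R) * IB"
    using Ibar_root[of \<beta>B \<tau>I \<tau>R k] assms by (simp_all add: IB_def R0_def)
  have x0: "x0$0 = 1 - IA - \<tau>R / \<tau>I * IA" "x0$1 = IA" "x0$2 = IA"
           "x0$3 = 1 - IB - \<tau>R / \<tau>I * IB" "x0$4 = IB" "x0$5 = IB"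
    by (simp_all add: x0_def endemic_eq_def Let_def IA_def IB_def)
  have "(reduced_field \<beta>A \<beta>B \<tau>I \<tau>R \<tau>P k has_derivative
          (\<lambda>h. block_diag (J \<beta>A IA) (J \<beta>B IB) *v h)) (at x0)"
    using has_derivative_reduced_field[of \<beta>A \<beta>B \<tau>I \<tau>R \<tau>P k x0]
    by (simp add: x0 J_def sit_jacobian_at_endemic IA IB assms(3))
  moreover have "Re c < 0"
    if "is_eigenvalue (complexify (block_diag (J \<beta>A IA) (J \<beta>B IB))) c" for c
  proof -
    have block_stable: "Re c < 0"
      if "\<beta> > 0" "I > 0" "is_eigenvalue (complexify (J \<beta> I)) c" for \<beta> I
      using that(3) unfolding J_def
      by (rule endemic_jacobian_stable[rotated 5]) (use that(1,2) assms(3-6) in simp_all)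
    show ?thesis
      using is_eigenvalue_block_diag[of "complexify (J \<beta>A IA)" "complexify (J \<beta>B IB)" c] that
        block_stable assms(1,2) IA(1) IB(1)
      by (auto simp: complexify_block_diag)
  qed
  ultimately show ?thesis
    unfolding locally_asymptotically_stable_def x0_def by blast
qed

end
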